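(* Let $I$ be a nonempty open real interval, let $t\in\,]0,1[\,$, let $f,g:I\to\mathbb{R}$ be such that $f$ is positive everywhere on $I$ and $g/f$ is continuous and strictly monotone on $I$, and let $h:I\to\mathbb{R}$ be a continuous strictly monotone function. Then \[ \Big(\frac{g}{f}\Big)^{-1}\!\left(\frac{tg(x)+(1-t)g(y)}{tf(x)+(1-t)f(y)}\right)=h^{-1}\big(th(x)+(1-t)h(y)\big)\qquad\text{for all } x,y\in I \] holds if and only if there exists $p\in\mathbb{R}$ with $(t-\frac12)p=0$ such that $(f,g)\sim(S_p\circ h,C_p\circ h)$ on $I$.
   Context: For $p\in\mathbb{R}$, the functions $S_p,C_p:\mathbb{R}\to\mathbb{R}$ are defined by $S_p(x)=\sin(\sqrt{-p}\,x)$, $C_p(x)=\cos(\sqrt{-p}\,x)$ if $p<0$; $S_p(x)=x$, $C_p(x)=1$ if $p=0$; $S_p(x)=\sinh(\sqrt{p}\,x)$, $C_p(x)=\cosh(\sqrt{p}\,x)$ if $p>0$. Two pairs of functions $(f,g):I\to\mathbb{R}^2$ and $(u,v):I\to\mathbb{R}^2$ are called equivalent, written $(f,g)\sim(u,v)$, if there exist constants $a,b,c,d\in\mathbb{R}$ with $ad\neq cb$ such that $u=af+bg$ and $v=cf+dg$ on $I$. *)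

theory Defs
  imports "HOL-Analysis.Analysis"
begin

definition S_fun :: "real \<Rightarrow> real \<Rightarrow> real" where
  "S_fun p x = (if p < 0 then sin (sqrt (- p) * x) else if p = 0 then x else sinh (sqrt p * x))"

definition C_fun :: "real \<Rightarrow> real \<Rightarrow> real" where
  "C_fun p x = (if p < 0 then cos (sqrt (- p) * x) else if p = 0 then 1 else cosh (sqrt p * x))"

definition pair_equiv :: "real set \<Rightarrow> (real \<Rightarrow> real) \<Rightarrow> (real \<Rightarrow> real)
    \<Rightarrow> (real \<Rightarrow> real) \<Rightarrow> (real \<Rightarrow> real) \<Rightarrow> bool" where
  "pair_equiv I f g u v \<longleftrightarrow>
     (\<exists>a b c d. a * d \<noteq> c * b \<and>
        (\<forall>x\<in>I. u x = a * f x + b * g x \<and> v x = c * f x + d * g x))"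

end

theory Submission
  imports Defs
begin

text \<open>
  Substituting \<open>u = h x\<close> turns the quasi-arithmetic mean into the weighted arithmetic mean, so
  for \<open>F = f \<circ> h\<inverse>\<close> and \<open>G = g \<circ> h\<inverse>\<close> the equation says
  \<open>t Q(u) + (1 - t) Q(v) = \<lambda>(u, v) Q(t u + (1 - t) v)\<close> for \<open>Q = F\<close> and \<open>Q = G\<close> with a common
  factor \<open>\<lambda>\<close>. As \<open>F\<close> and \<open>G\<close> are linearly independent at any two points, composing such means
  in two ways gives \<open>t (\<lambda>(v, u) - 1) = (1 - t) (\<lambda>(u, v) - 1)\<close>. For \<open>t \<noteq> 1/2\<close> this forces
  \<open>\<lambda> = 1\<close>, so \<open>F\<close> and \<open>G\<close> solve Jensen's equation and, being continuous, are affine.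
  For \<open>t = 1/2\<close> they satisfy \<open>Q(x - s) + Q(x + s) = c(x, s) Q(x)\<close>; linear independence again
  shows that \<open>c\<close> does not depend on \<open>x\<close> and that \<open>c(2s) + 2 = c(s)\<^sup>2\<close>, whence
  \<open>c(s) = 2 C\<^sub>p(s)\<close> for \<open>s = s\<^sub>0 / 2\<^sup>n\<close> and a suitable \<open>p\<close>. A continuous solution of this
  recurrence is determined by two of its values, so \<open>F\<close> and \<open>G\<close> are combinations of \<open>S\<^sub>p\<close>
  and \<open>C\<^sub>p\<close>. Conversely, the subtraction formula for \<open>S\<^sub>p\<close> shows that such pairs satisfy the
  equation.
\<close>

lemma homogeneous_2x2_trivial:
  fixes a b c d x y :: real
  assumes det: "a * d \<noteq> b * c" and "a * x + b * y = 0" and "c * x + d * y = 0"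
  shows "x = 0 \<and> y = 0"
proof -
  have "(a * d - b * c) * x = d * (a * x + b * y) - b * (c * x + d * y)"
    by (simp add: algebra_simps)
  also have "\<dots> = 0" using assms by simp
  finally have x: "(a * d - b * c) * x = 0" .
  have "(a * d - b * c) * y = a * (c * x + d * y) - c * (a * x + b * y)"
    by (simp add: algebra_simps)
  also have "\<dots> = 0" using assms by simp
  finally have y: "(a * d - b * c) * y = 0" .
  show ?thesis using x y det by simp
qed

lemma convex_weighted_mean_mem:
  fixes S :: "real set"
  assumes "convex S" "x \<in> S" "y \<in> S" "0 < A" "0 < B"
  shows "(A * x + B * y) / (A + B) \<in> S"
proof -
  have "(A / (A + B)) *\<^sub>R x + (B / (A + B)) *\<^sub>R y \<in> S"
    using assms by (intro convexD) (auto simp: add_divide_distrib[symmetric])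
  thus ?thesis by (simp add: add_divide_distrib)
qed

section \<open>Second-order recurrences on dyadic grids\<close>

lemma continuous_eq_on_dyadic_grid:
  fixes g :: "real \<Rightarrow> real"
  assumes xy: "x \<le> y" and L: "0 < L" and cont: "continuous_on {x..y} g"
    and grid: "\<And>n k. x + real k * L / 2^n \<le> y \<Longrightarrow> g (x + real k * L / 2^n) = g x"
  shows "g y = g x"
proof (cases "x = y")
  case False
  define S where "S = {0..(y - x) / L}"
  define D :: "real set" where "D = (\<Union>k m. {real m / 2^k})"
  have "closure (S \<inter> D) = closure S"
    unfolding S_def D_def using xy False L
    by (intro closure_dyadic_rationals_in_convex_set_pos_1) (auto simp: divide_le_0_iff)
  hence closure: "closure (S \<inter> D) = S"
    by (simp add: S_def closure_closed)
  have "continuous_on S (\<lambda>u. g (x + L * u))"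
    by (rule continuous_on_compose2[OF cont]) (use L in \<open>auto simp: S_def field_simps intro!: continuous_intros\<close>)
  moreover have "g (x + L * u) = g x" if "u \<in> S \<inter> D" for u
  proof -
    from that obtain k m where u: "u = real m / 2^k" and le: "u \<le> (y - x) / L"
      by (auto simp: S_def D_def)
    from le have "x + L * u \<le> y"
      using L by (simp add: field_simps)
    moreover have point: "x + real m * L / 2^k = x + L * u"
      using u by simp
    ultimately show ?thesis
      using grid[where n = k and k = m] unfolding point by blast
  qed
  moreover have "(y - x) / L \<in> closure (S \<inter> D)"
    unfolding closure using xy L by (simp add: S_def)
  ultimately have "g (x + L * ((y - x) / L)) = g x"
    using continuous_constant_on_closure[of "S \<inter> D" "\<lambda>u. g (x + L * u)"]
    unfolding closure by blast
  thus ?thesis using L by simp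
qed simp

lemma recurrence_zero_on_dyadic_grid:
  fixes D :: "real \<Rightarrow> real" and c :: "nat \<Rightarrow> real"
  assumes J: "is_interval J" and s: "0 < s" and a: "a \<in> J" "a + 2 * s \<in> J"
    and zero: "D a = 0" "D (a + 2 * s) = 0" and c: "\<And>n. c n \<noteq> 0"
    and rec: "\<And>n x. x - s / 2^n \<in> J \<Longrightarrow> x + s / 2^n \<in> J \<Longrightarrow>
                D (x - s / 2^n) + D (x + s / 2^n) = c n * D x"
  shows "k \<le> 2^n \<Longrightarrow> D (a + real k * (2 * s) / 2^n) = 0"
proof (induction n arbitrary: k)
  case 0
  hence "k = 0 \<or> k = 1" by auto
  thus ?case using zero by auto
next
  case (Suc n)
  have grid_mem: "a + real i * (2 * s) / 2^n \<in> J" if "i \<le> 2^n" for i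
  proof -
    have "real i \<le> 2^n" using that by (metis of_nat_le_iff of_nat_numeral of_nat_power)
    hence "real i * (2 * s) / 2^n \<le> 2 * s" using s by (simp add: field_simps)
    thus ?thesis using mem_is_interval_1_I[OF J a] s by simp
  qed
  show ?case
  proof (cases "even k")
    case True
    then obtain j where k: "k = 2 * j" by (rule evenE)
    hence "a + real k * (2 * s) / 2^Suc n = a + real j * (2 * s) / 2^n"
      by simp
    moreover have "D (a + real j * (2 * s) / 2^n) = 0"
      using Suc k by (intro Suc.IH) simp
    ultimately show ?thesis by (simp only:)
  next
    case False
    then obtain j where k: "k = 2 * j + 1" by (rule oddE)
    with Suc.prems have j: "j < 2^n" by simp
    define x where "x = a + real k * (2 * s) / 2^Suc n"
    have "x - s / 2^n = a + real j * (2 * s) / 2^n"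
      and "x + s / 2^n = a + real (j + 1) * (2 * s) / 2^n"
      unfolding x_def k by (simp_all add: field_simps)
    hence "c n * D x = 0"
      using rec[of x n] Suc.IH[of j] Suc.IH[of "j + 1"] grid_mem[of j] grid_mem[of "j + 1"] j
      by simp
    thus ?thesis using c unfolding x_def by simp
  qed
qed

lemma recurrence_zero_on_strip:
  fixes D :: "real \<Rightarrow> real"
  assumes J: "is_interval J" and s: "0 < s" and a: "a \<in> J" "a + 2 * s \<in> J"
    and rec: "\<And>x. x - s \<in> J \<Longrightarrow> x + s \<in> J \<Longrightarrow> D (x - s) + D (x + s) = c * D x"
    and zero: "\<And>x. a \<le> x \<Longrightarrow> x \<le> a + 2 * s \<Longrightarrow> D x = 0"
  shows "y \<in> J \<Longrightarrow> a - real n * s \<le> y \<Longrightarrow> y \<le> a + 2 * s + real n * s \<Longrightarrow> D y = 0"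
proof (induction n arbitrary: y)
  case 0 thus ?case using zero by simp
next
  case (Suc n)
  have ns: "0 \<le> real n * s" using s by simp
  have bounds: "a - real n * s - s \<le> y" "y \<le> a + 2 * s + real n * s + s"
    using Suc.prems(2,3) by (simp_all add: algebra_simps)
  consider "a - real n * s \<le> y \<and> y \<le> a + 2 * s + real n * s"
    | "a + 2 * s + real n * s < y" | "y < a - real n * s"
    by linarith
  thus ?case
  proof cases
    case 1 thus ?thesis using Suc.IH Suc.prems(1) by blast
  next
    case 2
    hence "a \<le> y - 2 * s" using ns by linarith
    hence mem: "y - 2 * s \<in> J" "y - s \<in> J"
      using mem_is_interval_1_I[OF J a(1) Suc.prems(1)] s by simp_all
    have "D (y - 2 * s) = 0" "D (y - s) = 0"
      using 2 bounds ns s by (intro Suc.IH mem; linarith)+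
    thus ?thesis using rec[of "y - s"] mem Suc.prems(1) by simp
  next
    case 3
    hence "y + 2 * s \<le> a + 2 * s" using ns by linarith
    hence mem: "y + 2 * s \<in> J" "y + s \<in> J"
      using mem_is_interval_1_I[OF J Suc.prems(1) a(2)] s by simp_all
    have "D (y + 2 * s) = 0" "D (y + s) = 0"
      using 3 bounds ns s by (intro Suc.IH mem; linarith)+
    thus ?thesis using rec[of "y + s"] mem Suc.prems(1) by (simp add: algebra_simps)
  qed
qed

lemma recurrence_extends_zero:
  fixes D :: "real \<Rightarrow> real"
  assumes J: "is_interval J" and s: "0 < s" and a: "a \<in> J" "a + 2 * s \<in> J"
    and rec: "\<And>x. x - s \<in> J \<Longrightarrow> x + s \<in> J \<Longrightarrow> D (x - s) + D (x + s) = c * D x"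
    and zero: "\<And>x. a \<le> x \<Longrightarrow> x \<le> a + 2 * s \<Longrightarrow> D x = 0"
    and x: "x \<in> J"
  shows "D x = 0"
proof -
  obtain n :: nat where "\<bar>x - a\<bar> / s \<le> real n"
    using real_arch_simple by blast
  hence "\<bar>x - a\<bar> \<le> real n * s" using s by (simp add: divide_le_eq)
  thus ?thesis
    using recurrence_zero_on_strip[OF J s a rec zero x, of n] s by (auto simp: abs_le_iff)
qed

lemma dyadic_recurrence_zero:
  fixes D :: "real \<Rightarrow> real" and c :: "nat \<Rightarrow> real"
  assumes J: "is_interval J" and cont: "continuous_on J D" and s: "0 < s"
    and a: "a \<in> J" "a + 2 * s \<in> J" and zero: "D a = 0" "D (a + 2 * s) = 0"
    and c: "\<And>n. c n \<noteq> 0"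
    and rec: "\<And>n x. x - s / 2^n \<in> J \<Longrightarrow> x + s / 2^n \<in> J \<Longrightarrow>
                D (x - s / 2^n) + D (x + s / 2^n) = c n * D x"
    and x: "x \<in> J"
  shows "D x = 0"
proof (rule recurrence_extends_zero[OF J s a _ _ x])
  show "D (y - s) + D (y + s) = c 0 * D y" if "y - s \<in> J" "y + s \<in> J" for y
    using rec[of y 0] that by simp
  show "D y = 0" if y: "a \<le> y" "y \<le> a + 2 * s" for y
  proof -
    have "D y = D a"
    proof (rule continuous_eq_on_dyadic_grid[OF y(1)])
      show "0 < 2 * s" using s by simp
      show "continuous_on {a..y} D"
        using cont mem_is_interval_1_I[OF J a] y
        by (meson atLeastAtMost_iff continuous_on_subset order_trans subsetI)
      fix n k assume "a + real k * (2 * s) / 2^n \<le> y"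
      hence "real k * (2 * s) / 2^n \<le> 2 * s" using y by simp
      hence "real k \<le> 2^n" using s by (simp add: field_simps)
      hence "k \<le> 2^n" by (metis of_nat_le_iff of_nat_numeral of_nat_power)
      thus "D (a + real k * (2 * s) / 2^n) = D a"
        using recurrence_zero_on_dyadic_grid[OF J s a zero c rec] zero by simp
    qed
    thus ?thesis using zero by simp
  qed
qed

section \<open>Jensen's functional equation\<close>

lemma jensen_eq_zero_on_segment:
  fixes R :: "real \<Rightarrow> real"
  assumes t: "0 < t" "t < 1" and cont: "continuous_on {a..b} R"
    and jensen: "\<And>u v. u \<in> {a..b} \<Longrightarrow> v \<in> {a..b} \<Longrightarrow>
                   R (t * u + (1 - t) * v) = t * R u + (1 - t) * R v"
    and Ra: "R a = 0" and Rb: "R b = 0" and x: "x \<in> {a..b}"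
  shows "R x = 0"
proof (rule ccontr)
  assume Rx: "R x \<noteq> 0"
  define A where "A = {z \<in> {a..x}. R z = 0}"
  define B where "B = {z \<in> {x..b}. R z = 0}"
  have "closed A" "closed B"
    unfolding A_def B_def using x
    by (intro continuous_closed_preimage_constant continuous_on_subset[OF cont]; auto)+
  moreover have "a \<in> A" "b \<in> B" and bdd: "bdd_above A" "bdd_below B"
    using Ra Rb x by (auto simp: A_def B_def intro: bdd_aboveI[of _ x] bdd_belowI[of _ x])
  ultimately have A: "Sup A \<in> A" and B: "Inf B \<in> B"
    using closed_contains_Sup closed_contains_Inf by blast+
  have "Sup A < x" "x < Inf B"
    using A B Rx unfolding A_def B_def by (auto simp: order.order_iff_strict)
  \<comment> \<open>The zeros of \<open>R\<close> nearest to \<open>x\<close> on either side have a weighted mean strictly between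
      them, which is again a zero.\<close>
  define m where "m = t * Sup A + (1 - t) * Inf B"
  have "0 < (1 - t) * (Inf B - Sup A)" "0 < t * (Inf B - Sup A)"
    using \<open>Sup A < x\<close> \<open>x < Inf B\<close> t by simp_all
  hence "Sup A < m" "m < Inf B"
    unfolding m_def by (simp_all add: algebra_simps)
  moreover have "R m = 0"
    using jensen[of "Sup A" "Inf B"] A B x unfolding m_def A_def B_def by auto
  ultimately show False
    using cSup_upper[OF _ bdd(1), of m] cInf_lower[OF _ bdd(2), of m] A B
    unfolding A_def B_def by (cases "m \<le> x") auto
qed

lemma jensen_eq_imp_chord:
  fixes Q :: "real \<Rightarrow> real"
  assumes t: "0 < t" "t < 1" and ab: "a < b" and cont: "continuous_on {a..b} Q"
    and jensen: "\<And>u v. u \<in> {a..b} \<Longrightarrow> v \<in> {a..b} \<Longrightarrow>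
                   Q (t * u + (1 - t) * v) = t * Q u + (1 - t) * Q v"
    and z: "z \<in> {a..b}"
  shows "Q z = Q a + (Q b - Q a) / (b - a) * (z - a)"
proof -
  define \<gamma> where "\<gamma> = (Q b - Q a) / (b - a)"
  define R where "R z = Q z - (Q a + \<gamma> * (z - a))" for z
  have "R z = 0"
  proof (rule jensen_eq_zero_on_segment[OF t _ _ _ _ z])
    show "continuous_on {a..b} R"
      unfolding R_def by (intro continuous_intros cont)
    show "R (t * u + (1 - t) * v) = t * R u + (1 - t) * R v" if "u \<in> {a..b}" "v \<in> {a..b}" for u v
      using jensen[OF that] unfolding R_def by (simp add: algebra_simps)
    show "R a = 0" "R b = 0"
      using ab unfolding R_def \<gamma>_def by simp_all
  qed
  thus ?thesis unfolding R_def \<gamma>_def by simp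
qed

lemma continuous_jensen_eq_imp_affine:
  fixes Q :: "real \<Rightarrow> real"
  assumes J: "is_interval J" and cont: "continuous_on J Q" and t: "0 < t" "t < 1"
    and jensen: "\<And>u v. u \<in> J \<Longrightarrow> v \<in> J \<Longrightarrow>
                   Q (t * u + (1 - t) * v) = t * Q u + (1 - t) * Q v"
  shows "\<exists>\<alpha> \<beta>. \<forall>x\<in>J. Q x = \<alpha> * x + \<beta>"
proof (cases "\<exists>a\<in>J. \<exists>b\<in>J. a < b")
  case True
  then obtain a b where ab: "a \<in> J" "b \<in> J" "a < b" by blast
  define \<alpha> where "\<alpha> = (Q b - Q a) / (b - a)"
  have "Q x = \<alpha> * x + (Q a - \<alpha> * a)" if x: "x \<in> J" for x
  proof -
    define a' where "a' = min a x"
    define b' where "b' = max b x"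
    have "a' \<in> J" "b' \<in> J"
      using ab x by (simp_all add: a'_def b'_def min_def max_def)
    hence seg: "{a'..b'} \<subseteq> J"
      using mem_is_interval_1_I[OF J] by (meson atLeastAtMost_iff subsetI)
    define \<gamma> where "\<gamma> = (Q b' - Q a') / (b' - a')"
    have chord: "Q z = Q a' + \<gamma> * (z - a')" if "z \<in> {a'..b'}" for z
      unfolding \<gamma>_def
    proof (rule jensen_eq_imp_chord[OF t _ continuous_on_subset[OF cont seg] _ that])
      show "a' < b'" using ab by (simp add: a'_def b'_def)
    qed (use jensen seg in blast)
    have "a \<in> {a'..b'}" "b \<in> {a'..b'}" "x \<in> {a'..b'}"
      using ab by (auto simp: a'_def b'_def)
    note chords = this[THEN chord]
    have "Q b - Q a = \<gamma> * (b - a)" and "Q x - Q a = \<gamma> * (x - a)"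
      unfolding chords by (simp_all add: algebra_simps)
    hence "\<alpha> = \<gamma>" and "Q x = Q a + \<gamma> * (x - a)"
      using ab unfolding \<alpha>_def by simp_all
    thus ?thesis by (simp add: algebra_simps)
  qed
  thus ?thesis by blast
next
  case False
  hence single: "x = y" if "x \<in> J" "y \<in> J" for x y
    using that by (meson linorder_neqE)
  have "Q x = 0 * x + Q (SOME x. x \<in> J)" if "x \<in> J" for x
    using single[OF that someI[of "\<lambda>x. x \<in> J", OF that]] by simp
  thus ?thesis by blast
qed

section \<open>The functions \<open>S\<^sub>p\<close> and \<open>C\<^sub>p\<close>\<close>

lemma S_fun_minus: "S_fun p (- x) = - S_fun p x"
  unfolding S_fun_def by auto

lemma C_fun_0: "C_fun p 0 = 1"
  unfolding C_fun_def by auto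

lemma S_fun_diff: "S_fun p (x - y) = S_fun p x * C_fun p y - C_fun p x * S_fun p y"
  unfolding S_fun_def C_fun_def by (auto simp: right_diff_distrib sin_diff sinh_diff)

lemma S_fun_sum_shift: "S_fun p (x - s) + S_fun p (x + s) = 2 * C_fun p s * S_fun p x"
  unfolding S_fun_def C_fun_def
  by (auto simp: right_diff_distrib distrib_left sin_add sin_diff sinh_add sinh_diff)

lemma C_fun_sum_shift: "C_fun p (x - s) + C_fun p (x + s) = 2 * C_fun p s * C_fun p x"
  unfolding S_fun_def C_fun_def
  by (auto simp: right_diff_distrib distrib_left cos_add cos_diff cosh_add cosh_diff)

lemma C_fun_double: "C_fun p (2 * s) = 2 * (C_fun p s)^2 - 1"
  using C_fun_sum_shift[of p s s] by (simp add: C_fun_0 power2_eq_square)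

lemma continuous_on_S_fun [continuous_intros]:
  fixes f :: "'a::t2_space \<Rightarrow> real"
  assumes "continuous_on A f"
  shows "continuous_on A (\<lambda>x. S_fun p (f x))"
  unfolding S_fun_def by (cases "p < 0"; cases "p = 0") (simp_all add: assms continuous_intros)

lemma continuous_on_C_fun [continuous_intros]:
  fixes f :: "'a::t2_space \<Rightarrow> real"
  assumes "continuous_on A f"
  shows "continuous_on A (\<lambda>x. C_fun p (f x))"
  unfolding C_fun_def by (cases "p < 0"; cases "p = 0") (simp_all add: assms continuous_intros)

lemma S_C_combination_sum_shift:
  "(\<alpha> * S_fun p (x - s) + \<beta> * C_fun p (x - s)) + (\<alpha> * S_fun p (x + s) + \<beta> * C_fun p (x + s))
     = 2 * C_fun p s * (\<alpha> * S_fun p x + \<beta> * C_fun p x)"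
proof -
  have "(\<alpha> * S_fun p (x - s) + \<beta> * C_fun p (x - s)) + (\<alpha> * S_fun p (x + s) + \<beta> * C_fun p (x + s))
        = \<alpha> * (S_fun p (x - s) + S_fun p (x + s)) + \<beta> * (C_fun p (x - s) + C_fun p (x + s))"
    by (simp add: algebra_simps)
  thus ?thesis
    unfolding S_fun_sum_shift C_fun_sum_shift by (simp add: algebra_simps)
qed

lemma S_C_interpolation:
  assumes "S_fun p (b - a) \<noteq> 0"
  shows "\<exists>\<alpha> \<beta>. \<alpha> * S_fun p a + \<beta> * C_fun p a = ya \<and> \<alpha> * S_fun p b + \<beta> * C_fun p b = yb"
proof -
  define \<Delta> where "\<Delta> = S_fun p b * C_fun p a - C_fun p b * S_fun p a"
  define \<alpha> where "\<alpha> = (yb * C_fun p a - ya * C_fun p b) / \<Delta>"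
  define \<beta> where "\<beta> = (ya * S_fun p b - yb * S_fun p a) / \<Delta>"
  have \<Delta>: "\<Delta> \<noteq> 0"
    using assms unfolding \<Delta>_def S_fun_diff .
  have "\<alpha> * S_fun p a + \<beta> * C_fun p a = ya * \<Delta> / \<Delta>"
    unfolding \<alpha>_def \<beta>_def \<Delta>_def by (simp add: add_divide_distrib[symmetric] algebra_simps)
  moreover have "\<alpha> * S_fun p b + \<beta> * C_fun p b = yb * \<Delta> / \<Delta>"
    unfolding \<alpha>_def \<beta>_def \<Delta>_def by (simp add: add_divide_distrib[symmetric] algebra_simps)
  ultimately show ?thesis using \<Delta> by auto
qed

lemma exists_C_fun_eq_below_1:
  fixes s0 \<gamma> :: real
  assumes s0: "0 < s0" and \<gamma>: "0 < \<gamma>" "\<gamma> < 1"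
  shows "\<exists>p. C_fun p s0 = \<gamma> \<and> (\<forall>s\<in>{0..s0}. 0 < C_fun p s) \<and> S_fun p (2 * s0) \<noteq> 0"
proof -
  define \<theta> where "\<theta> = arccos \<gamma>"
  have \<theta>: "0 < \<theta>" "\<theta> < pi / 2"
    unfolding \<theta>_def using arccos_lt_bounded[of \<gamma>] arccos_less_arccos[of 0 \<gamma>] \<gamma>
    by (auto simp: arccos_0)
  define p where "p = - ((\<theta> / s0)^2)"
  have p: "p < 0" and sqrt_p: "sqrt (- p) = \<theta> / s0"
    unfolding p_def using \<theta> s0 by simp_all
  have "C_fun p s0 = \<gamma>"
    unfolding C_fun_def using p sqrt_p s0 \<gamma> by (simp add: \<theta>_def cos_arccos)
  moreover have "0 < C_fun p s" if "s \<in> {0..s0}" for s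
  proof -
    have "0 \<le> \<theta> / s0 * s" "\<theta> / s0 * s \<le> \<theta>"
      using that s0 \<theta> by (auto simp: field_simps mult_left_le)
    hence "0 < cos (\<theta> / s0 * s)"
      using \<theta> by (intro cos_gt_zero_pi) linarith+
    thus ?thesis unfolding C_fun_def using p sqrt_p by simp
  qed
  moreover have "S_fun p (2 * s0) \<noteq> 0"
  proof -
    have "0 < sin (2 * \<theta>)" using \<theta> by (intro sin_gt_zero) auto
    moreover have "\<theta> / s0 * (2 * s0) = 2 * \<theta>" using s0 by simp
    ultimately show ?thesis unfolding S_fun_def using p sqrt_p by simp
  qed
  ultimately show ?thesis by blast
qed

lemma exists_C_fun_eq_above_1:
  fixes s0 \<gamma> :: real
  assumes s0: "0 < s0" and \<gamma>: "1 < \<gamma>"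
  shows "\<exists>p. C_fun p s0 = \<gamma> \<and> (\<forall>s\<in>{0..s0}. 0 < C_fun p s) \<and> S_fun p (2 * s0) \<noteq> 0"
proof -
  define \<theta> where "\<theta> = arcosh \<gamma>"
  have \<theta>: "0 < \<theta>"
    unfolding \<theta>_def using arcosh_real_gt_1_iff[of \<gamma>] \<gamma> by auto
  define p where "p = (\<theta> / s0)^2"
  have p: "0 < p" and sqrt_p: "sqrt p = \<theta> / s0"
    unfolding p_def using \<theta> s0 by simp_all
  have "C_fun p s0 = \<gamma>"
    unfolding C_fun_def using p sqrt_p s0 \<gamma> by (simp add: \<theta>_def cosh_arcosh_real)
  moreover have "0 < C_fun p s" for s
    unfolding C_fun_def using p by (simp add: cosh_real_pos)
  moreover have "S_fun p (2 * s0) \<noteq> 0"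
    unfolding S_fun_def using p sqrt_p \<theta> s0 by simp
  ultimately show ?thesis by blast
qed

lemma exists_C_fun_eq:
  fixes s0 \<gamma> :: real
  assumes s0: "0 < s0" and \<gamma>: "0 < \<gamma>"
  shows "\<exists>p. C_fun p s0 = \<gamma> \<and> (\<forall>s\<in>{0..s0}. 0 < C_fun p s) \<and> S_fun p (2 * s0) \<noteq> 0"
proof -
  consider "\<gamma> < 1" | "\<gamma> = 1" | "1 < \<gamma>" by linarith
  thus ?thesis
  proof cases
    case 2
    hence "C_fun 0 s0 = \<gamma>" "\<forall>s\<in>{0..s0}. 0 < C_fun 0 s" "S_fun 0 (2 * s0) \<noteq> 0"
      unfolding C_fun_def S_fun_def using s0 by auto
    thus ?thesis by blast
  qed (use exists_C_fun_eq_below_1[OF s0 \<gamma>] exists_C_fun_eq_above_1[OF s0] in auto)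
qed

lemma S_fun_weighted_mean_zero:
  assumes "(t - 1/2) * p = 0"
  shows "t * S_fun p (t * X + (1 - t) * Y - X) + (1 - t) * S_fun p (t * X + (1 - t) * Y - Y) = 0"
proof (cases "p = 0")
  case True thus ?thesis unfolding S_fun_def by (simp add: algebra_simps)
next
  case False
  hence t: "t = 1/2" using assms by simp
  define D where "D = t * X + (1 - t) * Y - Y"
  have "t * X + (1 - t) * Y - X = - D"
    unfolding D_def t by (simp add: algebra_simps)
  hence "S_fun p (t * X + (1 - t) * Y - X) = - S_fun p D"
    by (simp only: S_fun_minus)
  hence "t * S_fun p (t * X + (1 - t) * Y - X) + (1 - t) * S_fun p D = 0"
    by (simp add: t)
  thus ?thesis by (simp only: D_def)
qed

definition in_S_C_span :: "real set \<Rightarrow> real \<Rightarrow> (real \<Rightarrow> real) \<Rightarrow> bool" where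
  "in_S_C_span J p Q \<longleftrightarrow> (\<exists>\<alpha> \<beta>. \<forall>x\<in>J. Q x = \<alpha> * S_fun p x + \<beta> * C_fun p x)"

lemma in_S_C_span_0_iff_affine:
  "in_S_C_span J 0 Q \<longleftrightarrow> (\<exists>\<alpha> \<beta>. \<forall>x\<in>J. Q x = \<alpha> * x + \<beta>)"
  by (simp add: in_S_C_span_def S_fun_def C_fun_def)

lemma pair_equiv_of_span:
  fixes f g U V :: "real \<Rightarrow> real"
  assumes f: "\<forall>x\<in>I. f x = \<alpha>1 * U x + \<beta>1 * V x" and g: "\<forall>x\<in>I. g x = \<alpha>2 * U x + \<beta>2 * V x"
    and f_pos: "\<forall>x\<in>I. 0 < f x" and x12: "x1 \<in> I" "x2 \<in> I"
    and ratio_ne: "g x1 / f x1 \<noteq> g x2 / f x2"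
  shows "pair_equiv I f g U V"
proof -
  define \<delta> where "\<delta> = \<alpha>1 * \<beta>2 - \<alpha>2 * \<beta>1"
  have U: "\<beta>2 * f x - \<beta>1 * g x = \<delta> * U x" and V: "\<alpha>1 * g x - \<alpha>2 * f x = \<delta> * V x"
    if "x \<in> I" for x
    using f g that unfolding \<delta>_def by (simp_all add: algebra_simps)
  have \<delta>: "\<delta> \<noteq> 0"
  proof
    assume "\<delta> = 0"
    have det: "f x1 * - g x2 \<noteq> - g x1 * f x2"
    proof
      assume "f x1 * - g x2 = - g x1 * f x2"
      hence "g x1 * f x2 = g x2 * f x1" by (simp add: algebra_simps)
      moreover have "f x1 \<noteq> 0" "f x2 \<noteq> 0" using f_pos x12 by auto
      ultimately show False using ratio_ne by (simp add: frac_eq_eq)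
    qed
    have "f x1 * \<beta>2 + - g x1 * \<beta>1 = 0" "f x2 * \<beta>2 + - g x2 * \<beta>1 = 0"
      and "f x1 * \<alpha>2 + - g x1 * \<alpha>1 = 0" "f x2 * \<alpha>2 + - g x2 * \<alpha>1 = 0"
      using U[OF x12(1)] U[OF x12(2)] V[OF x12(1)] V[OF x12(2)] \<open>\<delta> = 0\<close>
      by (simp_all add: algebra_simps)
    hence "\<beta>1 = 0" "\<beta>2 = 0" "\<alpha>1 = 0" "\<alpha>2 = 0"
      using homogeneous_2x2_trivial[OF det] by blast+
    thus False using f f_pos x12 by auto
  qed
  have "\<forall>x\<in>I. U x = (\<beta>2 / \<delta>) * f x + (- \<beta>1 / \<delta>) * g x
              \<and> V x = (- \<alpha>2 / \<delta>) * f x + (\<alpha>1 / \<delta>) * g x"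
    using U V \<delta> by (auto simp: field_simps)
  moreover have "(\<beta>2 / \<delta>) * (\<alpha>1 / \<delta>) - (- \<alpha>2 / \<delta>) * (- \<beta>1 / \<delta>)
                 = (\<alpha>1 * \<beta>2 - \<alpha>2 * \<beta>1) / (\<delta> * \<delta>)"
    using \<delta> by (simp add: field_simps)
  hence "(\<beta>2 / \<delta>) * (\<alpha>1 / \<delta>) - (- \<alpha>2 / \<delta>) * (- \<beta>1 / \<delta>) = 1 / \<delta>"
    using \<delta> unfolding \<delta>_def[symmetric] by simp
  hence "(\<beta>2 / \<delta>) * (\<alpha>1 / \<delta>) \<noteq> (- \<alpha>2 / \<delta>) * (- \<beta>1 / \<delta>)"
    using \<delta> by auto
  ultimately show ?thesis
    unfolding pair_equiv_def by blast
qed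

section \<open>Bajraktarevic means equal to the weighted arithmetic mean\<close>

\<comment> \<open>\<open>a0 < b0\<close> merely witness that \<open>J\<close> is not a single point.\<close>
locale bajraktarevic_arith_mean =
  fixes J :: "real set" and F G K :: "real \<Rightarrow> real" and t a0 b0 :: real
  assumes J: "is_interval J"
    and F_pos: "\<And>u. u \<in> J \<Longrightarrow> 0 < F u"
    and G_eq: "\<And>u. u \<in> J \<Longrightarrow> G u = K u * F u"
    and K_inj: "inj_on K J"
    and K_cont: "continuous_on J K"
    and t: "0 < t" "t < 1"
    and mean_eq: "\<And>u v. u \<in> J \<Longrightarrow> v \<in> J \<Longrightarrow>
       t * G u + (1 - t) * G v = K (t * u + (1 - t) * v) * (t * F u + (1 - t) * F v)"
    and a0: "a0 \<in> J" and b0: "b0 \<in> J" and a0_less_b0: "a0 < b0"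
begin

lemma mean_mem: "u \<in> J \<Longrightarrow> v \<in> J \<Longrightarrow> t * u + (1 - t) * v \<in> J"
  using convexD[OF is_interval_convex[OF J], of u v t "1 - t"] t by simp

lemma between_mem: "a \<in> J \<Longrightarrow> b \<in> J \<Longrightarrow> a \<le> x \<Longrightarrow> x \<le> b \<Longrightarrow> x \<in> J"
  using mem_is_interval_1_I[OF J] by blast

lemma F_balance:
  assumes "u \<in> J" "v \<in> J"
  shows "t * F u * (K u - K (t * u + (1 - t) * v)) = (1 - t) * F v * (K (t * u + (1 - t) * v) - K v)"
  using mean_eq[OF assms] G_eq[OF assms(1)] G_eq[OF assms(2)] by (simp add: algebra_simps)

lemma continuous_on_F: "continuous_on J F"
  unfolding continuous_on_eq_continuous_within
proof
  fix u0 assume u0: "u0 \<in> J"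
  obtain v where v: "v \<in> J" "v \<noteq> u0"
    using a0 b0 a0_less_b0 by (cases "u0 = a0") auto
  define w where "w u = t * u + (1 - t) * v" for u
  \<comment> \<open>Away from \<open>v\<close>, \<open>F_balance\<close> expresses \<open>F\<close> through the continuous function \<open>K\<close>.\<close>
  define \<phi> where "\<phi> u = (1 - t) * F v * (K (w u) - K v) / (t * (K u - K (w u)))" for u
  have K_ne: "K u \<noteq> K (w u)" if "u \<in> J" "u \<noteq> v" for u
  proof
    assume "K u = K (w u)"
    hence "u = w u"
      using K_inj that v mean_mem unfolding inj_on_def w_def by blast
    hence "(1 - t) * (v - u) = 0" unfolding w_def by (simp add: algebra_simps)
    thus False using that t by simp
  qed
  have F_eq: "F u = \<phi> u" if "u \<in> J" "u \<noteq> v" for u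
    using F_balance[OF that(1) v(1)] K_ne[OF that] t unfolding \<phi>_def w_def
    by (simp add: field_simps)
  have "continuous_on J (\<lambda>u. K (w u))"
    by (rule continuous_on_compose2[OF K_cont]) (auto simp: w_def mean_mem v intro!: continuous_intros)
  hence "continuous (at u0 within J) \<phi>"
    unfolding \<phi>_def using K_ne[OF u0 v(2)[symmetric]] t u0 K_cont
    by (intro continuous_intros) (auto simp: continuous_on_eq_continuous_within)
  thus "continuous (at u0 within J) F"
  proof (rule continuous_transform_within[of _ _ _ "\<bar>u0 - v\<bar>"])
    fix u assume "u \<in> J" "dist u u0 < \<bar>u0 - v\<bar>"
    thus "\<phi> u = F u" using F_eq by (auto simp: dist_real_def)
  qed (use u0 v in auto)
qed

lemma continuous_on_G: "continuous_on J G"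
proof -
  have "continuous_on J (\<lambda>u. K u * F u)"
    by (intro continuous_intros K_cont continuous_on_F)
  thus ?thesis by (rule continuous_on_eq) (simp add: G_eq)
qed

lemma F_G_independent:
  assumes ab: "a \<in> J" "b \<in> J" "a \<noteq> b" and "\<alpha> * F a + \<beta> * F b = 0" "\<alpha> * G a + \<beta> * G b = 0"
  shows "\<alpha> = 0 \<and> \<beta> = 0"
proof -
  have det: "F a * G b \<noteq> F b * G a"
  proof
    assume "F a * G b = F b * G a"
    hence "F a * F b * (K b - K a) = 0"
      using G_eq ab by (simp add: algebra_simps)
    moreover have "K a \<noteq> K b"
      using K_inj ab unfolding inj_on_def by blast
    ultimately show False using F_pos[OF ab(1)] F_pos[OF ab(2)] by simp
  qed
  moreover have "F a * \<alpha> + F b * \<beta> = 0" "G a * \<alpha> + G b * \<beta> = 0"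
    using assms(4,5) by (simp_all only: mult.commute)
  ultimately show ?thesis by (rule homogeneous_2x2_trivial)
qed

definition mean_factor :: "real \<Rightarrow> real \<Rightarrow> real" where
  "mean_factor u v = (t * F u + (1 - t) * F v) / F (t * u + (1 - t) * v)"

lemma mean_factor_pos:
  assumes "u \<in> J" "v \<in> J"
  shows "0 < mean_factor u v"
proof -
  have "0 < t * F u + (1 - t) * F v"
    using F_pos[OF assms(1)] F_pos[OF assms(2)] t by (simp add: add_pos_pos)
  thus ?thesis
    unfolding mean_factor_def using F_pos[OF mean_mem[OF assms]] by simp
qed

lemma weighted_mean_eq_mean_factor:
  assumes Q: "Q \<in> {F, G}" and uv: "u \<in> J" "v \<in> J"
  shows "t * Q u + (1 - t) * Q v = mean_factor u v * Q (t * u + (1 - t) * v)"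
proof -
  have F_mean: "t * F u + (1 - t) * F v = mean_factor u v * F (t * u + (1 - t) * v)"
    unfolding mean_factor_def using F_pos[OF mean_mem[OF uv]] by simp
  show ?thesis
  proof (cases "Q = F")
    case False
    have "t * G u + (1 - t) * G v
          = K (t * u + (1 - t) * v) * (mean_factor u v * F (t * u + (1 - t) * v))"
      using mean_eq[OF uv] F_mean by simp
    also have "\<dots> = mean_factor u v * G (t * u + (1 - t) * v)"
      using G_eq[OF mean_mem[OF uv]] by simp
    finally show ?thesis using False Q by simp
  qed (use F_mean in simp)
qed

lemma mean_factor_relation:
  assumes Q: "Q \<in> {F, G}" and u: "u \<in> J" and v: "v \<in> J"
  defines "l1 \<equiv> mean_factor u v" and "l2 \<equiv> mean_factor v u"
    and "l3 \<equiv> mean_factor u (t * v + (1 - t) * u)" and "l4 \<equiv> mean_factor (t * u + (1 - t) * v) u"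
  shows "(l4 * l1 * (t * l2 + (1 - t)^2) - l3 * l2 * (t^2 + (1 - t) * l1)) * Q u
           + ((l4 * l1 - l3 * l2) * t * (1 - t)) * Q v = 0"
proof -
  define q where "q = 1 - t"
  define w1 where "w1 = t * u + q * v"
  define w2 where "w2 = t * v + q * u"
  define y where "y = t * u + q * w2"
  have w1: "w1 \<in> J" and w2: "w2 \<in> J"
    unfolding w1_def w2_def q_def using mean_mem u v by blast+
  \<comment> \<open>\<open>y\<close> is both the mean of \<open>u, w2\<close> and of \<open>w1, u\<close>; eliminating \<open>Q w1\<close>, \<open>Q w2\<close>, \<open>Q y\<close>
      from the four mean identities leaves the claimed relation.\<close>
  have y: "t * w1 + q * u = y"
    unfolding y_def w1_def w2_def q_def by (simp add: algebra_simps)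
  have e1: "t * Q u + q * Q v = l1 * Q w1"
    using weighted_mean_eq_mean_factor[OF Q u v] unfolding l1_def w1_def q_def .
  have e2: "t * Q v + q * Q u = l2 * Q w2"
    using weighted_mean_eq_mean_factor[OF Q v u] unfolding l2_def w2_def q_def .
  have e3: "t * Q u + q * Q w2 = l3 * Q y"
    using weighted_mean_eq_mean_factor[OF Q u w2] unfolding l3_def y_def w2_def q_def .
  have e4: "t * Q w1 + q * Q u = l4 * Q y"
    using weighted_mean_eq_mean_factor[OF Q w1 u] y unfolding l4_def w1_def q_def by simp
  have "(l4 * l1 * (t * l2 + q^2) - l3 * l2 * (t^2 + q * l1)) * Q u + ((l4 * l1 - l3 * l2) * t * q) * Q v
        = l1 * l2 * (l4 * (t * Q u + q * Q w2) - l3 * (t * Q w1 + q * Q u))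
          + l4 * l1 * q * (t * Q v + q * Q u - l2 * Q w2)
          - l3 * l2 * t * (t * Q u + q * Q v - l1 * Q w1)"
    by (simp add: algebra_simps power2_eq_square)
  also have "\<dots> = 0"
    unfolding e1 e2 e3 e4 by simp
  finally show ?thesis unfolding q_def .
qed

lemma mean_factor_swap:
  assumes u: "u \<in> J" and v: "v \<in> J" and "u \<noteq> v"
  shows "t * (mean_factor v u - 1) = (1 - t) * (mean_factor u v - 1)"
proof -
  define l1 l2 l3 l4
    where "l1 = mean_factor u v" and "l2 = mean_factor v u"
      and "l3 = mean_factor u (t * v + (1 - t) * u)" and "l4 = mean_factor (t * u + (1 - t) * v) u"
  have "F \<in> {F, G}" "G \<in> {F, G}" by simp_all
  note relation = this[THEN mean_factor_relation[OF _ u v], folded l1_def l2_def l3_def l4_def]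
  have coeffs: "l4 * l1 * (t * l2 + (1 - t)^2) - l3 * l2 * (t^2 + (1 - t) * l1) = 0"
               "(l4 * l1 - l3 * l2) * t * (1 - t) = 0"
    using F_G_independent[OF u v \<open>u \<noteq> v\<close> relation] by blast+
  hence "l3 * l2 = l4 * l1"
    using t by simp
  hence "l4 * l1 * ((t * l2 + (1 - t)^2) - (t^2 + (1 - t) * l1)) = 0"
    using coeffs(1) by (simp add: algebra_simps)
  moreover have "l4 * l1 \<noteq> 0"
    unfolding l4_def l1_def using mean_factor_pos u v mean_mem by (metis less_irrefl mult_pos_pos)
  ultimately have "t * l2 + (1 - t)^2 - (t^2 + (1 - t) * l1) = 0" by simp
  thus ?thesis unfolding l1_def l2_def by (simp add: algebra_simps power2_eq_square)
qed

lemma mean_factor_eq_1: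
  assumes "t \<noteq> 1/2" and u: "u \<in> J" and v: "v \<in> J"
  shows "mean_factor u v = 1"
proof (cases "u = v")
  case True
  thus ?thesis unfolding mean_factor_def using F_pos[OF u] by (simp add: algebra_simps)
next
  case False
  have "t * (mean_factor v u - 1) = (1 - t) * (mean_factor u v - 1)"
       "t * (mean_factor u v - 1) = (1 - t) * (mean_factor v u - 1)"
    using mean_factor_swap[OF u v False] mean_factor_swap[OF v u] False by auto
  hence "(2 * t - 1) * (mean_factor u v - 1) = 0"
    by (simp add: algebra_simps)
  thus ?thesis using assms(1) by simp
qed

lemma in_S_C_span_0:
  assumes "t \<noteq> 1/2" and Q: "Q \<in> {F, G}"
  shows "in_S_C_span J 0 Q"
proof -
  have "continuous_on J Q"
    using Q continuous_on_F continuous_on_G by blast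
  moreover have "Q (t * u + (1 - t) * v) = t * Q u + (1 - t) * Q v" if "u \<in> J" "v \<in> J" for u v
    using weighted_mean_eq_mean_factor[OF Q that] mean_factor_eq_1[OF assms(1) that] by simp
  ultimately show ?thesis
    unfolding in_S_C_span_0_iff_affine using continuous_jensen_eq_imp_affine[OF J _ t] by blast
qed

end

section \<open>The midpoint case\<close>

locale bajraktarevic_arith_midpoint = bajraktarevic_arith_mean +
  assumes t_half: "t = 1/2"
begin

\<comment> \<open>The coefficient \<open>c(x, s)\<close> of the equation \<open>Q (x - s) + Q (x + s) = c(x, s) Q x\<close> shared by
    \<open>F\<close> and \<open>G\<close>.\<close>
definition shift_ratio :: "real \<Rightarrow> real \<Rightarrow> real" where
  "shift_ratio x s = (F (x - s) + F (x + s)) / F x"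

lemma midpoint_mem: "x - s \<in> J \<Longrightarrow> x + s \<in> J \<Longrightarrow> x \<in> J"
  using mean_mem[of "x - s" "x + s"] by (simp add: t_half field_simps)

lemma shift_ratio_pos: "x - s \<in> J \<Longrightarrow> x + s \<in> J \<Longrightarrow> 0 < shift_ratio x s"
  unfolding shift_ratio_def using F_pos midpoint_mem by (simp add: add_pos_pos)

lemma sum_shift_eq_shift_ratio:
  assumes Q: "Q \<in> {F, G}" and "x - s \<in> J" "x + s \<in> J"
  shows "Q (x - s) + Q (x + s) = shift_ratio x s * Q x"
proof -
  have mid: "t * (x - s) + (1 - t) * (x + s) = x"
    by (simp add: t_half field_simps)
  have sum_eq: "P (x - s) + P (x + s) = 2 * mean_factor (x - s) (x + s) * P x" if "P \<in> {F, G}" for P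
    using weighted_mean_eq_mean_factor[OF that assms(2,3)] unfolding mid by (simp add: t_half)
  have "shift_ratio x s = 2 * mean_factor (x - s) (x + s)"
    unfolding shift_ratio_def sum_eq[of F, simplified] using F_pos[OF midpoint_mem[OF assms(2,3)]] by simp
  thus ?thesis using sum_eq[OF Q] by simp
qed

lemma shift_ratio_split:
  assumes s: "0 < s" and w: "w - 2 * s \<in> J" "w + 2 * s \<in> J"
  shows "shift_ratio (w - s) s = shift_ratio (w + s) s"
    and "shift_ratio w (2 * s) + 2 = shift_ratio w s * shift_ratio (w + s) s"
proof -
  have ws: "w - s \<in> J" "w \<in> J" "w + s \<in> J"
    using between_mem[OF w] s by auto
  define c1 c2 cm cp
    where "c1 = shift_ratio w s" and "c2 = shift_ratio w (2 * s)"
      and "cm = shift_ratio (w - s) s" and "cp = shift_ratio (w + s) s"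
  \<comment> \<open>The equations at \<open>w - s\<close>, \<open>w\<close>, \<open>w + s\<close> with steps \<open>s\<close> and \<open>2 s\<close> combine into a linear
      relation between \<open>Q (w - s)\<close> and \<open>Q (w + s)\<close>, whose coefficients must vanish.\<close>
  have relation: "(c2 + 2 - c1 * cm) * Q (w - s) + (c2 + 2 - c1 * cp) * Q (w + s) = 0"
    if Q: "Q \<in> {F, G}" for Q
  proof -
    have e1: "Q (w - s) + Q (w + s) = c1 * Q w"
      unfolding c1_def using sum_shift_eq_shift_ratio[OF Q ws(1,3)] .
    have e2: "Q (w - 2 * s) + Q (w + 2 * s) = c2 * Q w"
      unfolding c2_def using sum_shift_eq_shift_ratio[OF Q w] .
    have e3: "Q (w - 2 * s) + Q w = cm * Q (w - s)"
      unfolding cm_def using sum_shift_eq_shift_ratio[OF Q, of "w - s" s] w ws by (simp add: algebra_simps)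
    have e4: "Q w + Q (w + 2 * s) = cp * Q (w + s)"
      unfolding cp_def using sum_shift_eq_shift_ratio[OF Q, of "w + s" s] w ws by (simp add: algebra_simps)
    have "(c2 + 2 - c1 * cm) * Q (w - s) + (c2 + 2 - c1 * cp) * Q (w + s)
          = (c2 + 2) * (Q (w - s) + Q (w + s) - c1 * Q w)
            - c1 * (cm * Q (w - s) - (Q (w - 2 * s) + Q w))
            - c1 * (cp * Q (w + s) - (Q w + Q (w + 2 * s)))
            + c1 * (c2 * Q w - (Q (w - 2 * s) + Q (w + 2 * s)))"
      by (simp add: algebra_simps)
    also have "\<dots> = 0"
      unfolding e1 e2 e3 e4 by simp
    finally show ?thesis .
  qed
  have "F \<in> {F, G}" "G \<in> {F, G}" and "w - s \<noteq> w + s" using s by simp_all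
  hence "c2 + 2 - c1 * cm = 0 \<and> c2 + 2 - c1 * cp = 0"
    using F_G_independent[OF ws(1,3)] relation by blast
  hence c2: "c2 + 2 = c1 * cp" and "c1 * cm = c1 * cp" by linarith+
  moreover have "c1 \<noteq> 0"
    unfolding c1_def using shift_ratio_pos[OF ws(1,3)] by simp
  ultimately have "cm = cp" by simp
  with c2 show "shift_ratio (w - s) s = shift_ratio (w + s) s"
    and "shift_ratio w (2 * s) + 2 = shift_ratio w s * shift_ratio (w + s) s"
    unfolding c1_def c2_def cm_def cp_def by simp_all
qed

lemma shift_ratio_translate_half:
  assumes \<sigma>: "0 < \<sigma>" and x: "x - \<sigma> \<in> J" "x + 3 * \<sigma> / 2 \<in> J"
  shows "shift_ratio (x + \<sigma> / 2) \<sigma> = shift_ratio x \<sigma>"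
proof -
  define s where "s = \<sigma> / 2"
  have s: "0 < s" and \<sigma>_eq: "\<sigma> = 2 * s" unfolding s_def using \<sigma> by auto
  have outer: "x - 2 * s \<in> J" "x + 3 * s \<in> J"
    using x unfolding \<sigma>_eq by (simp_all add: algebra_simps)
  have "x + 2 * s \<in> J" "x + s - 2 * s \<in> J"
    using between_mem[OF outer] s by simp_all
  moreover have "x + s + 2 * s \<in> J"
    using outer by (simp add: algebra_simps)
  ultimately have "shift_ratio x (2 * s) + 2 = shift_ratio x s * shift_ratio (x + s) s"
    and "shift_ratio (x + s) (2 * s) + 2 = shift_ratio (x + s) s * shift_ratio x s"
    using shift_ratio_split[OF s, of x] shift_ratio_split[OF s, of "x + s"] outer
    by (simp_all add: algebra_simps)
  hence "shift_ratio (x + s) (2 * s) = shift_ratio x (2 * s)"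
    by (simp add: algebra_simps)
  thus ?thesis by (simp add: s_def)
qed

lemma shift_ratio_translate_dyadic:
  assumes "0 < \<sigma>" "x - \<sigma> \<in> J" "x + \<sigma> / 2^Suc n + \<sigma> \<in> J"
  shows "shift_ratio (x + \<sigma> / 2^Suc n) \<sigma> = shift_ratio x \<sigma>"
  using assms
proof (induction n arbitrary: \<sigma> x)
  case 0
  thus ?case using shift_ratio_translate_half[of \<sigma> x] by (simp add: algebra_simps)
next
  case (Suc n)
  define s where "s = \<sigma> / 2"
  define \<rho> where "\<rho> = s / 2^Suc n"
  have s: "0 < s" and \<rho>: "0 < \<rho>" and \<sigma>_eq: "\<sigma> = 2 * s"
    using Suc.prems(1) unfolding s_def \<rho>_def by simp_all
  have lo: "x - 2 * s \<in> J" and hi: "x + \<rho> + 2 * s \<in> J"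
    using Suc.prems(2,3) unfolding \<sigma>_eq \<rho>_def by (simp_all add: algebra_simps)
  have mem: "z \<in> J" if "x - 2 * s \<le> z" "z \<le> x + \<rho> + 2 * s" for z
    using between_mem[OF lo hi that] .
  have "shift_ratio x (2 * s) + 2 = shift_ratio x s * shift_ratio (x + s) s"
    using shift_ratio_split(2)[OF s lo mem] s \<rho> by simp
  moreover have "shift_ratio (x + \<rho>) (2 * s) + 2 = shift_ratio (x + \<rho>) s * shift_ratio (x + \<rho> + s) s"
    using shift_ratio_split(2)[OF s mem hi] s \<rho> by simp
  moreover have "shift_ratio (x + \<rho>) s = shift_ratio x s"
    using Suc.IH[OF s mem mem] s \<rho> unfolding \<rho>_def by (simp add: algebra_simps)
  moreover have "shift_ratio (x + s + \<rho>) s = shift_ratio (x + s) s"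
    using Suc.IH[OF s, of "x + s"] mem s \<rho> unfolding \<rho>_def by (simp add: algebra_simps)
  ultimately have "shift_ratio (x + \<rho>) (2 * s) = shift_ratio x (2 * s)"
    by (simp add: algebra_simps)
  moreover have "\<sigma> / 2^Suc (Suc n) = \<rho>"
    unfolding \<rho>_def s_def by simp
  ultimately show ?case unfolding \<sigma>_eq by simp
qed

lemma shift_ratio_translate_le:
  assumes \<sigma>: "0 < \<sigma>" and xy: "x \<le> y" and J_ends: "x - \<sigma> \<in> J" "y + \<sigma> \<in> J"
  shows "shift_ratio y \<sigma> = shift_ratio x \<sigma>"
proof (rule continuous_eq_on_dyadic_grid[OF xy, of "\<sigma> / 2"])
  have mem: "z \<in> J" if "x - \<sigma> \<le> z" "z \<le> y + \<sigma>" for z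
    using between_mem[OF J_ends that] .
  show "0 < \<sigma> / 2" using \<sigma> by simp
  have "continuous_on {x..y} (\<lambda>z. F (z - \<sigma>))" "continuous_on {x..y} (\<lambda>z. F (z + \<sigma>))"
    "continuous_on {x..y} F"
    using \<sigma> by (auto intro!: continuous_on_compose2[OF continuous_on_F] continuous_intros mem
                   continuous_on_subset[OF continuous_on_F])
  thus "continuous_on {x..y} (\<lambda>z. shift_ratio z \<sigma>)"
    unfolding shift_ratio_def using F_pos mem \<sigma> by (intro continuous_intros) (auto simp: less_imp_neq[symmetric])
  fix n k
  show "x + real k * (\<sigma> / 2) / 2^n \<le> y \<Longrightarrow>
          shift_ratio (x + real k * (\<sigma> / 2) / 2^n) \<sigma> = shift_ratio x \<sigma>"
  proof (induction k)
    case (Suc k)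
    define z where "z = x + real k * (\<sigma> / 2) / 2^n"
    have step: "x + real (Suc k) * (\<sigma> / 2) / 2^n = z + \<sigma> / 2^Suc n"
      unfolding z_def by (simp add: field_simps)
    have pos: "0 < \<sigma> / 2^Suc n" using \<sigma> by simp
    hence "z \<le> y" using Suc.prems unfolding step by linarith
    moreover have "x \<le> z" unfolding z_def using \<sigma> by simp
    ultimately have "z - \<sigma> \<in> J" "z + \<sigma> / 2^Suc n + \<sigma> \<in> J"
      using Suc.prems[unfolded step] pos \<sigma> by (intro mem; linarith)+
    hence "shift_ratio (z + \<sigma> / 2^Suc n) \<sigma> = shift_ratio z \<sigma>"
      using \<sigma> by (intro shift_ratio_translate_dyadic)
    thus ?case using Suc.IH \<open>z \<le> y\<close> unfolding step z_def by simp
  qed simp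
qed

lemma shift_ratio_indep:
  assumes "0 < \<sigma>" "x - \<sigma> \<in> J" "x + \<sigma> \<in> J" "y - \<sigma> \<in> J" "y + \<sigma> \<in> J"
  shows "shift_ratio y \<sigma> = shift_ratio x \<sigma>"
  using shift_ratio_translate_le[of \<sigma> x y] shift_ratio_translate_le[of \<sigma> y x] assms
  by (cases "x \<le> y") auto

definition s0 :: real where "s0 = (b0 - a0) / 2"
definition m0 :: real where "m0 = a0 + s0"
definition shift_coeff :: "real \<Rightarrow> real" where "shift_coeff s = shift_ratio m0 s"

lemma s0_pos: "0 < s0"
  unfolding s0_def using a0_less_b0 by simp

lemma a0_plus_2s0: "a0 + 2 * s0 = b0"
  unfolding s0_def by (simp add: field_simps)

lemma m0_shift_mem: "0 \<le> s \<Longrightarrow> s \<le> s0 \<Longrightarrow> m0 - s \<in> J \<and> m0 + s \<in> J"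
  using between_mem[OF a0 b0] a0_plus_2s0 unfolding m0_def by auto

lemma sum_shift_eq_shift_coeff:
  assumes "0 < s" "s \<le> s0" "Q \<in> {F, G}" "x - s \<in> J" "x + s \<in> J"
  shows "Q (x - s) + Q (x + s) = shift_coeff s * Q x"
proof -
  have "shift_ratio x s = shift_coeff s"
    unfolding shift_coeff_def using shift_ratio_indep[of s m0 x] m0_shift_mem[of s] assms by auto
  thus ?thesis using sum_shift_eq_shift_ratio[OF assms(3-5)] by simp
qed

lemma shift_coeff_pos: "0 < s \<Longrightarrow> s \<le> s0 \<Longrightarrow> 0 < shift_coeff s"
  unfolding shift_coeff_def using shift_ratio_pos m0_shift_mem by auto

lemma shift_coeff_double:
  assumes s: "0 < s" and "2 * s \<le> s0"
  shows "shift_coeff (2 * s) + 2 = (shift_coeff s)^2"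
proof -
  have "m0 - 2 * s \<in> J" "m0 + 2 * s \<in> J" "m0 \<in> J" "m0 - s \<in> J" "m0 + s \<in> J"
    using m0_shift_mem[of "2 * s"] m0_shift_mem[of 0] m0_shift_mem[of s] assms by auto
  hence "shift_ratio m0 (2 * s) + 2 = shift_ratio m0 s * shift_ratio (m0 + s) s"
    and "shift_ratio (m0 + s) s = shift_ratio m0 s"
    using shift_ratio_split(2)[OF s] shift_ratio_indep[OF s, of m0 "m0 + s"] by (simp_all add: algebra_simps)
  thus ?thesis unfolding shift_coeff_def by (simp add: power2_eq_square)
qed

lemma shift_coeff_dyadic_eq_C_fun:
  assumes p_s0: "2 * C_fun p s0 = shift_coeff s0" and p_pos: "\<forall>s\<in>{0..s0}. 0 < C_fun p s"
  shows "shift_coeff (s0 / 2^n) = 2 * C_fun p (s0 / 2^n)"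
proof (induction n)
  case 0 thus ?case using p_s0 by simp
next
  case (Suc n)
  define s where "s = s0 / 2^Suc n"
  have s: "0 < s" and s_le: "2 * s \<le> s0" and s_double: "2 * s = s0 / 2^n"
    unfolding s_def using s0_pos by (simp_all add: field_simps)
  have "(shift_coeff s)^2 = shift_coeff (2 * s) + 2"
    using shift_coeff_double[OF s s_le] by simp
  also have "\<dots> = 2 * C_fun p (2 * s) + 2"
    using Suc.IH s_double by simp
  also have "\<dots> = (2 * C_fun p s)^2"
    by (simp add: C_fun_double power2_eq_square)
  finally have "(shift_coeff s)^2 = (2 * C_fun p s)^2" .
  moreover have "0 \<le> shift_coeff s" "0 \<le> 2 * C_fun p s"
    using shift_coeff_pos[OF s] p_pos s s_le by (auto simp: less_imp_le)
  ultimately show ?case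
    unfolding s_def[symmetric] using power2_eq_iff_nonneg by blast
qed

lemma in_S_C_span_of_shift_coeff:
  assumes p_s0: "2 * C_fun p s0 = shift_coeff s0" and p_pos: "\<forall>s\<in>{0..s0}. 0 < C_fun p s"
    and p_S: "S_fun p (2 * s0) \<noteq> 0" and Q: "Q \<in> {F, G}"
  shows "in_S_C_span J p Q"
proof -
  obtain \<alpha> \<beta> where ends: "\<alpha> * S_fun p a0 + \<beta> * C_fun p a0 = Q a0"
                         "\<alpha> * S_fun p b0 + \<beta> * C_fun p b0 = Q b0"
  proof -
    have "b0 - a0 = 2 * s0" using a0_plus_2s0 by linarith
    thus thesis using S_C_interpolation[of p b0 a0 "Q a0" "Q b0"] p_S that by auto
  qed
  define D where "D x = Q x - (\<alpha> * S_fun p x + \<beta> * C_fun p x)" for x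
  have "D x = 0" if "x \<in> J" for x
  proof (rule dyadic_recurrence_zero[OF J _ s0_pos a0 _ _ _ _ _ that])
    show "continuous_on J D"
      unfolding D_def using Q continuous_on_F continuous_on_G
      by (auto intro!: continuous_intros)
    show "a0 + 2 * s0 \<in> J" "D a0 = 0" "D (a0 + 2 * s0) = 0"
      using b0 ends unfolding D_def a0_plus_2s0 by simp_all
    show "shift_coeff (s0 / 2^n) \<noteq> 0" for n
      using shift_coeff_pos[of "s0 / 2^n"] s0_pos by (simp add: field_simps)
    fix n x assume "x - s0 / 2^n \<in> J" "x + s0 / 2^n \<in> J"
    thus "D (x - s0 / 2^n) + D (x + s0 / 2^n) = shift_coeff (s0 / 2^n) * D x"
      using sum_shift_eq_shift_coeff[of "s0 / 2^n", OF _ _ Q] s0_pos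
        S_C_combination_sum_shift[of \<alpha> p x "s0 / 2^n" \<beta>]
        shift_coeff_dyadic_eq_C_fun[OF p_s0 p_pos, of n]
      unfolding D_def by (simp add: field_simps)
  qed
  thus ?thesis unfolding in_S_C_span_def D_def by auto
qed

lemma in_S_C_span_midpoint: "\<exists>p. in_S_C_span J p F \<and> in_S_C_span J p G"
proof -
  obtain p where "C_fun p s0 = shift_coeff s0 / 2" "\<forall>s\<in>{0..s0}. 0 < C_fun p s" "S_fun p (2 * s0) \<noteq> 0"
    using exists_C_fun_eq[OF s0_pos, of "shift_coeff s0 / 2"] shift_coeff_pos[OF s0_pos] by auto
  thus ?thesis using in_S_C_span_of_shift_coeff[of p] by auto
qed

end

lemma (in bajraktarevic_arith_mean) in_S_C_span_F_G:
  "\<exists>p. (t - 1/2) * p = 0 \<and> in_S_C_span J p F \<and> in_S_C_span J p G"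
proof (cases "t = 1/2")
  case True
  interpret bajraktarevic_arith_midpoint J F G K t a0 b0
    by unfold_locales (rule True)
  show ?thesis using in_S_C_span_midpoint True by auto
next
  case False
  thus ?thesis using in_S_C_span_0 by (intro exI[of _ 0]) auto
qed

section \<open>Change of variables\<close>

lemma convex_continuous_image:
  fixes \<phi> :: "real \<Rightarrow> real"
  assumes "is_interval I" "continuous_on I \<phi>"
  shows "convex (\<phi> ` I)"
  using connected_continuous_image[OF assms(2)] assms(1)
  by (simp add: is_interval_connected_1[symmetric] is_interval_convex)

lemma bajraktarevic_arith_mean_pullback:
  fixes I :: "real set" and f g h :: "real \<Rightarrow> real"
  assumes I: "is_interval I" "open I" and t: "0 < t" "t < 1"
    and f_pos: "\<forall>x\<in>I. 0 < f x"
    and k_cont: "continuous_on I (\<lambda>x. g x / f x)" and k_inj: "inj_on (\<lambda>x. g x / f x) I"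
    and h_cont: "continuous_on I h" and h_inj: "inj_on h I"
    and means_eq: "\<forall>x\<in>I. \<forall>y\<in>I.
            the_inv_into I (\<lambda>z. g z / f z) ((t * g x + (1 - t) * g y) / (t * f x + (1 - t) * f y))
            = the_inv_into I h (t * h x + (1 - t) * h y)"
    and x0: "x0 \<in> I" and x1: "x1 \<in> I" "x0 \<noteq> x1"
  shows "bajraktarevic_arith_mean (h ` I)
           (\<lambda>u. f (the_inv_into I h u)) (\<lambda>u. g (the_inv_into I h u))
           (\<lambda>u. g (the_inv_into I h u) / f (the_inv_into I h u)) t
           (min (h x0) (h x1)) (max (h x0) (h x1))"
proof -
  define k where "k x = g x / f x" for x
  define hinv where "hinv = the_inv_into I h"
  have hinv_mem: "hinv u \<in> I" and h_hinv: "h (hinv u) = u" if "u \<in> h ` I" for u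
    using that the_inv_into_into[OF h_inj] f_the_inv_into_f[OF h_inj]
    unfolding hinv_def by auto
  have hinv_cont: "continuous_on (h ` I) hinv"
    unfolding hinv_def
    by (rule continuous_on_inverse_open[OF I(2) h_cont]) (simp_all add: the_inv_into_f_f[OF h_inj])
  have "h x0 \<noteq> h x1"
    using h_inj x0 x1 unfolding inj_on_def by blast
  show ?thesis
    unfolding hinv_def[symmetric] k_def[symmetric]
  proof
    show "is_interval (h ` I)"
      using convex_continuous_image[OF I(1) h_cont] by (simp add: is_interval_convex_1)
    show "0 < f (hinv u)" and "g (hinv u) = k (hinv u) * f (hinv u)" if "u \<in> h ` I" for u
      using f_pos hinv_mem[OF that] unfolding k_def by auto
    show "inj_on (\<lambda>u. k (hinv u)) (h ` I)"
      using k_inj hinv_mem h_hinv unfolding k_def inj_on_def by metis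
    show "continuous_on (h ` I) (\<lambda>u. k (hinv u))"
      using k_cont hinv_mem unfolding k_def by (intro continuous_on_compose2[OF _ hinv_cont]) auto
    show "0 < t" "t < 1" by (fact t)+
    show "min (h x0) (h x1) \<in> h ` I" "max (h x0) (h x1) \<in> h ` I"
      "min (h x0) (h x1) < max (h x0) (h x1)"
      using x0 x1 \<open>h x0 \<noteq> h x1\<close> by (auto simp: min_def max_def)
    fix u v assume u: "u \<in> h ` I" and v: "v \<in> h ` I"
    define x y where "x = hinv u" and "y = hinv v"
    have x: "x \<in> I" "h x = u" and y: "y \<in> I" "h y = v"
      unfolding x_def y_def using hinv_mem h_hinv u v by auto
    define z where "z = (t * g x + (1 - t) * g y) / (t * f x + (1 - t) * f y)"
    have fx: "0 < f x" and fy: "0 < f y"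
      using f_pos x y by auto
    hence A: "0 < t * f x" and B: "0 < (1 - t) * f y"
      using t by auto
    have "z = (t * f x * k x + (1 - t) * f y * k y) / (t * f x + (1 - t) * f y)"
      unfolding z_def k_def using fx fy by simp
    hence "z \<in> k ` I"
      using convex_weighted_mean_mem[OF convex_continuous_image[OF I(1) k_cont[folded k_def]] _ _ A B] x y
      by (simp add: mult.commute)
    moreover have "the_inv_into I k z = hinv (t * u + (1 - t) * v)"
      using means_eq x y unfolding hinv_def k_def z_def by metis
    ultimately have "k (hinv (t * u + (1 - t) * v)) = z"
      using f_the_inv_into_f[OF k_inj[folded k_def]] by metis
    moreover have "z * (t * f x + (1 - t) * f y) = t * g x + (1 - t) * g y"
      unfolding z_def using A B by simp
    ultimately show "t * g (hinv u) + (1 - t) * g (hinv v)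
                     = k (hinv (t * u + (1 - t) * v)) * (t * f (hinv u) + (1 - t) * f (hinv v))"
      unfolding x_def[symmetric] y_def[symmetric] by simp
  qed
qed

lemma bajraktarevic_eq_quasi_arith_imp_pair_equiv:
  fixes I :: "real set" and f g h :: "real \<Rightarrow> real"
  assumes I: "is_interval I" "open I" "I \<noteq> {}" and t: "0 < t" "t < 1"
    and f_pos: "\<forall>x\<in>I. 0 < f x"
    and k_cont: "continuous_on I (\<lambda>x. g x / f x)" and k_inj: "inj_on (\<lambda>x. g x / f x) I"
    and h_cont: "continuous_on I h" and h_inj: "inj_on h I"
    and means_eq: "\<forall>x\<in>I. \<forall>y\<in>I.
            the_inv_into I (\<lambda>z. g z / f z) ((t * g x + (1 - t) * g y) / (t * f x + (1 - t) * f y))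
            = the_inv_into I h (t * h x + (1 - t) * h y)"
  shows "\<exists>p. (t - 1/2) * p = 0 \<and> pair_equiv I f g (\<lambda>x. S_fun p (h x)) (\<lambda>x. C_fun p (h x))"
proof -
  obtain x0 \<epsilon> where x0: "x0 \<in> I" and \<epsilon>: "0 < \<epsilon>" "ball x0 \<epsilon> \<subseteq> I"
    using I(2,3) open_contains_ball by blast
  define x1 where "x1 = x0 + \<epsilon> / 2"
  have x1: "x1 \<in> I" "x0 \<noteq> x1"
    using \<epsilon> unfolding x1_def by (auto simp: dist_real_def)
  define hinv where "hinv = the_inv_into I h"
  obtain p where p: "(t - 1/2) * p = 0"
    and "in_S_C_span (h ` I) p (\<lambda>u. f (hinv u))" "in_S_C_span (h ` I) p (\<lambda>u. g (hinv u))"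
    using bajraktarevic_arith_mean.in_S_C_span_F_G[OF bajraktarevic_arith_mean_pullback[OF
            I(1,2) t f_pos k_cont k_inj h_cont h_inj means_eq x0 x1]]
    unfolding hinv_def by blast
  then obtain \<alpha>1 \<beta>1 \<alpha>2 \<beta>2
    where "\<forall>u\<in>h ` I. f (hinv u) = \<alpha>1 * S_fun p u + \<beta>1 * C_fun p u"
      and "\<forall>u\<in>h ` I. g (hinv u) = \<alpha>2 * S_fun p u + \<beta>2 * C_fun p u"
    unfolding in_S_C_span_def by blast
  hence "\<forall>x\<in>I. f x = \<alpha>1 * S_fun p (h x) + \<beta>1 * C_fun p (h x)"
    and "\<forall>x\<in>I. g x = \<alpha>2 * S_fun p (h x) + \<beta>2 * C_fun p (h x)"
    unfolding hinv_def using the_inv_into_f_f[OF h_inj] by auto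
  moreover have "g x0 / f x0 \<noteq> g x1 / f x1"
    using k_inj x0 x1 unfolding inj_on_def by blast
  ultimately have "pair_equiv I f g (\<lambda>x. S_fun p (h x)) (\<lambda>x. C_fun p (h x))"
    by (intro pair_equiv_of_span[OF _ _ f_pos x0 x1(1)])
  thus ?thesis using p by blast
qed

lemma pair_equiv_imp_bajraktarevic_eq_quasi_arith:
  fixes I :: "real set" and f g h :: "real \<Rightarrow> real"
  assumes I: "is_interval I" and t: "0 < t" "t < 1" and f_pos: "\<forall>x\<in>I. 0 < f x"
    and k_inj: "inj_on (\<lambda>x. g x / f x) I"
    and h_cont: "continuous_on I h" and h_inj: "inj_on h I"
    and p: "(t - 1/2) * p = 0"
    and equiv: "pair_equiv I f g (\<lambda>x. S_fun p (h x)) (\<lambda>x. C_fun p (h x))"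
  shows "\<forall>x\<in>I. \<forall>y\<in>I.
            the_inv_into I (\<lambda>z. g z / f z) ((t * g x + (1 - t) * g y) / (t * f x + (1 - t) * f y))
            = the_inv_into I h (t * h x + (1 - t) * h y)"
proof (intro ballI)
  fix x y assume x: "x \<in> I" and y: "y \<in> I"
  obtain a b c d where det: "a * d \<noteq> c * b"
    and SC: "\<forall>x\<in>I. S_fun p (h x) = a * f x + b * g x \<and> C_fun p (h x) = c * f x + d * g x"
    using equiv unfolding pair_equiv_def by blast
  define U where "U = t * h x + (1 - t) * h y"
  have "U \<in> h ` I"
    unfolding U_def using convexD[OF convex_continuous_image[OF I h_cont], of "h x" "h y" t "1 - t"] x y t
    by simp
  then obtain m where m: "m \<in> I" "h m = U" by blast
  have SC_at: "S_fun p (h z) = a * f z + b * g z" "C_fun p (h z) = c * f z + d * g z" if "z \<in> I" for z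
    using SC that by blast+
  \<comment> \<open>The subtraction formula for \<open>S\<^sub>p\<close> turns the mean identity for \<open>S\<^sub>p\<close> into a determinant.\<close>
  have "(a * d - c * b) * (f m * (t * g x + (1 - t) * g y) - g m * (t * f x + (1 - t) * f y))
        = t * (S_fun p (h m) * C_fun p (h x) - C_fun p (h m) * S_fun p (h x))
          + (1 - t) * (S_fun p (h m) * C_fun p (h y) - C_fun p (h m) * S_fun p (h y))"
    unfolding SC_at[OF m(1)] SC_at[OF x] SC_at[OF y] by (simp add: algebra_simps)
  also have "\<dots> = t * S_fun p (U - h x) + (1 - t) * S_fun p (U - h y)"
    unfolding m(2) S_fun_diff ..
  also have "\<dots> = 0"
    unfolding U_def by (rule S_fun_weighted_mean_zero[OF p])
  finally have "f m * (t * g x + (1 - t) * g y) = g m * (t * f x + (1 - t) * f y)"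
    using det by simp
  moreover have "0 < t * f x + (1 - t) * f y" "0 < f m"
    using t f_pos x y m by (simp_all add: add_pos_pos)
  ultimately have "g m / f m = (t * g x + (1 - t) * g y) / (t * f x + (1 - t) * f y)"
    by (simp add: field_simps)
  hence "the_inv_into I (\<lambda>z. g z / f z) ((t * g x + (1 - t) * g y) / (t * f x + (1 - t) * f y)) = m"
    using the_inv_into_f_eq[OF k_inj _ m(1)] by simp
  also have "m = the_inv_into I h (t * h x + (1 - t) * h y)"
    using the_inv_into_f_f[OF h_inj m(1)] m(2) unfolding U_def by simp
  finally show "the_inv_into I (\<lambda>z. g z / f z) ((t * g x + (1 - t) * g y) / (t * f x + (1 - t) * f y))
                = the_inv_into I h (t * h x + (1 - t) * h y)" .
qed

theorem corollary3p2:
  fixes I :: "real set" and t :: real and f g h :: "real \<Rightarrow> real"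
  assumes "is_interval I" and "open I" and "I \<noteq> {}"
    and "0 < t" and "t < 1"
    and "\<forall>x\<in>I. f x > 0"
    and "continuous_on I (\<lambda>x. g x / f x)"
    and "strict_mono_on I (\<lambda>x. g x / f x) \<or> strict_antimono_on I (\<lambda>x. g x / f x)"
    and "continuous_on I h"
    and "strict_mono_on I h \<or> strict_antimono_on I h"
  shows "(\<forall>x\<in>I. \<forall>y\<in>I.
            the_inv_into I (\<lambda>z. g z / f z)
              ((t * g x + (1 - t) * g y) / (t * f x + (1 - t) * f y))
            = the_inv_into I h (t * h x + (1 - t) * h y))
         \<longleftrightarrow> (\<exists>p::real. (t - 1/2) * p = 0 \<and>
                 pair_equiv I f g (\<lambda>x. S_fun p (h x)) (\<lambda>x. C_fun p (h x)))"
proof -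
  have k_inj: "inj_on (\<lambda>x. g x / f x) I" and h_inj: "inj_on h I"
    using assms(8,10) strict_mono_on_imp_inj_on strict_antimono_iff_antimono by blast+
  show ?thesis
    using bajraktarevic_eq_quasi_arith_imp_pair_equiv[OF assms(1-7) k_inj assms(9) h_inj]
      pair_equiv_imp_bajraktarevic_eq_quasi_arith[OF assms(1,4,5,6) k_inj assms(9) h_inj]
    by blast
qed

end
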